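(* In a combinatorial auction as described in the context, if $(x^*,p)$ is a Walrasian equilibrium whose payments $\rho_i=p\,a^{i*}$ form a minimum-revenue core-selecting (MRC) payment vector, then $(x^*,p)$ is a price-match equilibrium.
   Context: Combinatorial auction: item types $j\in\mathcal J$ with supply $c_j\in\mathbb Z_{\ge1}$ (vector $c$); bidders $\mathcal I$; finite set of bids $\mathcal K$, bid $k$ made by bidder $i(k)$ with bundle $a^k\in\mathbb Z^J_{\ge0}$, $a^k\le c$, and amount $b_k\ge0$; $\mathcal K_i$ = bids of bidder $i$; bids taken truthful. $\bm A$ = matrix with columns $a^k$, $\bm B$ with $\bm B_{i,k}=1$ iff $k\in\mathcal K_i$. Feasible allocation: $x\in\{0,1\}^K$, $\bm Ax\le c$, $\bm Bx\le\bm 1$. $w(\mathcal C,c',\cdot)$ = maximum total bid amount over feasible allocations with supply $c'$ using only bids of bidders in $\mathcal C$. $x^*$ efficient (optimal) allocation; $a^{i*},b_{i*}$ bundle and amount of $i$'s accepted bid ($\bm 0,0$ if none). A payment vector $\rho$ ($\rho_i=0$ for non-winners) is core-selecting at $x^*$ if $\rho_i\le b_{i*}$ for all $i$ and $\sum_{i\in\mathcal C}(b_{i*}-\rho_i)+\sum_{i\in\mathcal I}\rho_i\ge w(\mathcal C,c,\mathcal K^{\mathcal C})$ for all $\mathcal C\subseteq\mathcal I$ ($\mathcal K^{\mathcal C}$ = bids of bidders in $\mathcal C$); it is MRC if it minimizes $\sum_i\rho_i$ among core-selecting payment vectors. A Walrasian equilibrium (WE) is $(x^*,p)$, $p\in\mathbb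 R^J_{\ge0}$, with $s_i=b_{i*}-p\,a^{i*}\ge0$, $p\,a^k+s_{i(k)}\ge b_k$ for all bids $k$, and $p_j=0$ whenever $(\bm Ax^* )_j<c_j$. A WE is a price-match equilibrium (PME) if for every bidder $i$ there is a feasible allocation $x^{-i}$ with $x^{-i}_k=0$ for $k\in\mathcal K_i$, $p\,a^k\le b_k$ whenever $x^{-i}_k=1$, and $p\bm Ax^{-i}=p\bm Ax^*$. (Items may include artificial items, i.e. valid cuts added as rows of $\bm A$.) *)

theory Defs
  imports Complex_Main
begin

text \<open>An allocation x in {0,1}^K is represented by the
  set S of accepted bids (x_k = 1 iff k in S).\<close>

definition auction ::
  "'j set \<Rightarrow> 'i set \<Rightarrow> 'k set \<Rightarrow> ('k \<Rightarrow> 'i) \<Rightarrow> ('k \<Rightarrow> 'j \<Rightarrow> nat) \<Rightarrow> ('k \<Rightarrow> real)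
    \<Rightarrow> ('j \<Rightarrow> nat) \<Rightarrow> bool" where
  "auction J I K bidder a b c \<longleftrightarrow>
     finite J \<and> finite I \<and> finite K \<and>
     (\<forall>j\<in>J. c j \<ge> 1) \<and>
     (\<forall>k\<in>K. bidder k \<in> I \<and> b k \<ge> 0 \<and> (\<forall>j\<in>J. a k j \<le> c j))"

definition usage :: "('k \<Rightarrow> 'j \<Rightarrow> nat) \<Rightarrow> 'k set \<Rightarrow> 'j \<Rightarrow> nat" where
  "usage a S j = (\<Sum>k\<in>S. a k j)"

definition feasible ::
  "'j set \<Rightarrow> 'k set \<Rightarrow> ('k \<Rightarrow> 'i) \<Rightarrow> ('k \<Rightarrow> 'j \<Rightarrow> nat) \<Rightarrow> ('j \<Rightarrow> nat) \<Rightarrow> 'k set \<Rightarrow> bool" where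
  "feasible J K bidder a c' S \<longleftrightarrow>
     S \<subseteq> K \<and> (\<forall>j\<in>J. usage a S j \<le> c' j) \<and>
     (\<forall>i. card {k\<in>S. bidder k = i} \<le> 1)"

definition total_bid :: "('k \<Rightarrow> real) \<Rightarrow> 'k set \<Rightarrow> real" where
  "total_bid b S = (\<Sum>k\<in>S. b k)"

definition w ::
  "'j set \<Rightarrow> 'k set \<Rightarrow> ('k \<Rightarrow> 'i) \<Rightarrow> ('k \<Rightarrow> 'j \<Rightarrow> nat) \<Rightarrow> ('k \<Rightarrow> real) \<Rightarrow> ('j \<Rightarrow> nat)
    \<Rightarrow> 'i set \<Rightarrow> real" where
  "w J K bidder a b c' C =
     Max (total_bid b ` {S. feasible J K bidder a c' S \<and> (\<forall>k\<in>S. bidder k \<in> C)})"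

definition efficient ::
  "'j set \<Rightarrow> 'k set \<Rightarrow> ('k \<Rightarrow> 'i) \<Rightarrow> ('k \<Rightarrow> 'j \<Rightarrow> nat) \<Rightarrow> ('k \<Rightarrow> real) \<Rightarrow> ('j \<Rightarrow> nat)
    \<Rightarrow> 'k set \<Rightarrow> bool" where
  "efficient J K bidder a b c X \<longleftrightarrow>
     feasible J K bidder a c X \<and>
     (\<forall>S. feasible J K bidder a c S \<longrightarrow> total_bid b S \<le> total_bid b X)"

text \<open>Bundle a^{i*} and amount b_{i*} of i's accepted bid in X (0 if none;
  feasibility guarantees at most one accepted bid per bidder).\<close>
definition abun :: "('k \<Rightarrow> 'i) \<Rightarrow> ('k \<Rightarrow> 'j \<Rightarrow> nat) \<Rightarrow> 'k set \<Rightarrow> 'i \<Rightarrow> 'j \<Rightarrow> nat" where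
  "abun bidder a X i j = (\<Sum>k\<in>{k\<in>X. bidder k = i}. a k j)"

definition bamt :: "('k \<Rightarrow> 'i) \<Rightarrow> ('k \<Rightarrow> real) \<Rightarrow> 'k set \<Rightarrow> 'i \<Rightarrow> real" where
  "bamt bidder b X i = (\<Sum>k\<in>{k\<in>X. bidder k = i}. b k)"

definition winner :: "('k \<Rightarrow> 'i) \<Rightarrow> 'k set \<Rightarrow> 'i \<Rightarrow> bool" where
  "winner bidder X i \<longleftrightarrow> (\<exists>k\<in>X. bidder k = i)"

definition pdot :: "'j set \<Rightarrow> ('j \<Rightarrow> real) \<Rightarrow> ('j \<Rightarrow> nat) \<Rightarrow> real" where
  "pdot J p v = (\<Sum>j\<in>J. p j * real (v j))"

definition core_selecting ::
  "'j set \<Rightarrow> 'i set \<Rightarrow> 'k set \<Rightarrow> ('k \<Rightarrow> 'i) \<Rightarrow> ('k \<Rightarrow> 'j \<Rightarrow> nat) \<Rightarrow> ('k \<Rightarrow> real)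
    \<Rightarrow> ('j \<Rightarrow> nat) \<Rightarrow> 'k set \<Rightarrow> ('i \<Rightarrow> real) \<Rightarrow> bool" where
  "core_selecting J I K bidder a b c X \<rho> \<longleftrightarrow>
     (\<forall>i\<in>I. \<not> winner bidder X i \<longrightarrow> \<rho> i = 0) \<and>
     (\<forall>i\<in>I. \<rho> i \<le> bamt bidder b X i) \<and>
     (\<forall>C\<subseteq>I. (\<Sum>i\<in>C. bamt bidder b X i - \<rho> i) + (\<Sum>i\<in>I. \<rho> i)
               \<ge> w J K bidder a b c C)"

definition MRC ::
  "'j set \<Rightarrow> 'i set \<Rightarrow> 'k set \<Rightarrow> ('k \<Rightarrow> 'i) \<Rightarrow> ('k \<Rightarrow> 'j \<Rightarrow> nat) \<Rightarrow> ('k \<Rightarrow> real)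
    \<Rightarrow> ('j \<Rightarrow> nat) \<Rightarrow> 'k set \<Rightarrow> ('i \<Rightarrow> real) \<Rightarrow> bool" where
  "MRC J I K bidder a b c X \<rho> \<longleftrightarrow>
     core_selecting J I K bidder a b c X \<rho> \<and>
     (\<forall>\<rho>'. core_selecting J I K bidder a b c X \<rho>' \<longrightarrow> (\<Sum>i\<in>I. \<rho> i) \<le> (\<Sum>i\<in>I. \<rho>' i))"

definition walrasian ::
  "'j set \<Rightarrow> 'i set \<Rightarrow> 'k set \<Rightarrow> ('k \<Rightarrow> 'i) \<Rightarrow> ('k \<Rightarrow> 'j \<Rightarrow> nat) \<Rightarrow> ('k \<Rightarrow> real)
    \<Rightarrow> ('j \<Rightarrow> nat) \<Rightarrow> 'k set \<Rightarrow> ('j \<Rightarrow> real) \<Rightarrow> bool" where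
  "walrasian J I K bidder a b c X p \<longleftrightarrow>
     feasible J K bidder a c X \<and>
     (\<forall>j\<in>J. p j \<ge> 0) \<and>
     (\<forall>i\<in>I. bamt bidder b X i - pdot J p (abun bidder a X i) \<ge> 0) \<and>
     (\<forall>k\<in>K. pdot J p (a k) + (bamt bidder b X (bidder k) - pdot J p (abun bidder a X (bidder k)))
               \<ge> b k) \<and>
     (\<forall>j\<in>J. usage a X j < c j \<longrightarrow> p j = 0)"

definition price_match ::
  "'j set \<Rightarrow> 'i set \<Rightarrow> 'k set \<Rightarrow> ('k \<Rightarrow> 'i) \<Rightarrow> ('k \<Rightarrow> 'j \<Rightarrow> nat) \<Rightarrow> ('k \<Rightarrow> real)
    \<Rightarrow> ('j \<Rightarrow> nat) \<Rightarrow> 'k set \<Rightarrow> ('j \<Rightarrow> real) \<Rightarrow> bool" where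
  "price_match J I K bidder a b c X p \<longleftrightarrow>
     walrasian J I K bidder a b c X p \<and>
     (\<forall>i\<in>I. \<exists>Y. feasible J K bidder a c Y \<and> (\<forall>k\<in>Y. bidder k \<noteq> i) \<and>
                 (\<forall>k\<in>Y. pdot J p (a k) \<le> b k) \<and>
                 pdot J p (usage a Y) = pdot J p (usage a X))"

end

theory Submission
  imports Defs
begin

text \<open>At Walrasian prices every bidder's bid is worth at most its price plus the bidder's
  surplus, and no feasible allocation is worth more at these prices than \<open>x\<^sup>*\<close>.
  So if a coalition \<open>C\<close> can achieve \<open>w(C) \<ge> \<Sum>\<^sub>C s + p A x\<^sup>*\<close>, its optimal allocation
  must meet both bounds with equality: each of its bids pays at least its price and its
  value at prices \<open>p\<close> is \<open>p A x\<^sup>*\<close>; this is the allocation \<open>x\<^sup>-\<^sup>i\<close> required for every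
  bidder \<open>i \<notin> C\<close>. Minimality of the revenue provides such a coalition for each winner \<open>i\<close>:
  if every coalition avoiding \<open>i\<close> had positive slack in its core constraint, lowering
  \<open>\<rho>\<^sub>i\<close> by the least slack would give a core-selecting vector of smaller revenue.
  For a loser \<open>x\<^sup>*\<close> itself serves as \<open>x\<^sup>-\<^sup>i\<close>.\<close>

definition surplus ::
  "'j set \<Rightarrow> ('k \<Rightarrow> 'i) \<Rightarrow> ('k \<Rightarrow> 'j \<Rightarrow> nat) \<Rightarrow> ('k \<Rightarrow> real) \<Rightarrow> 'k set \<Rightarrow> ('j \<Rightarrow> real)
    \<Rightarrow> 'i \<Rightarrow> real" where
  "surplus J bidder a b X p i = bamt bidder b X i - pdot J p (abun bidder a X i)"

lemma walrasianD:
  assumes "walrasian J I K bidder a b c X p"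
  shows "feasible J K bidder a c X"
    and "\<And>j. j \<in> J \<Longrightarrow> p j \<ge> 0"
    and "\<And>i. i \<in> I \<Longrightarrow> surplus J bidder a b X p i \<ge> 0"
    and "\<And>k. k \<in> K \<Longrightarrow> b k \<le> pdot J p (a k) + surplus J bidder a b X p (bidder k)"
    and "\<And>j. j \<in> J \<Longrightarrow> usage a X j < c j \<Longrightarrow> p j = 0"
  using assms unfolding walrasian_def surplus_def by auto

lemma feasible_subset: "feasible J K bidder a c Y \<Longrightarrow> Y \<subseteq> K"
  unfolding feasible_def by simp

lemma feasible_bids_of_bidder:
  assumes "feasible J K bidder a c X" "finite X" "k \<in> X"
  shows "{k'\<in>X. bidder k' = bidder k} = {k}"
proof -
  have "card {k'\<in>X. bidder k' = bidder k} \<le> Suc 0"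
    using assms(1) unfolding feasible_def by auto
  then show ?thesis
    using assms(2,3) card_le_Suc0_iff_eq[of "{k'\<in>X. bidder k' = bidder k}"] by auto
qed

lemma feasible_inj_on_bidder:
  assumes "feasible J K bidder a c Y" "finite Y"
  shows "inj_on bidder Y"
proof (rule inj_onI)
  fix x y assume "x \<in> Y" "y \<in> Y" "bidder x = bidder y"
  then show "x = y" using feasible_bids_of_bidder[OF assms \<open>x \<in> Y\<close>] by auto
qed

lemma w_attained:
  assumes "finite K"
  obtains Y where "feasible J K bidder a c Y" "\<forall>k\<in>Y. bidder k \<in> C"
    "total_bid b Y = w J K bidder a b c C"
proof -
  let ?S = "{S. feasible J K bidder a c S \<and> (\<forall>k\<in>S. bidder k \<in> C)}"
  have "?S \<subseteq> Pow K" unfolding feasible_def by auto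
  then have "finite ?S" using assms by (simp add: finite_subset)
  moreover have "{} \<in> ?S" unfolding feasible_def usage_def by auto
  ultimately have "Max (total_bid b ` ?S) \<in> total_bid b ` ?S" by (intro Max_in) auto
  then show ?thesis using that unfolding w_def by auto
qed

lemma pdot_usage:
  assumes "finite J" "finite Y"
  shows "pdot J p (usage a Y) = (\<Sum>k\<in>Y. pdot J p (a k))"
  unfolding pdot_def usage_def
  by (simp add: sum_distrib_left sum.swap[of _ J Y])

lemma sum_pdot_abun:
  assumes "finite J" "finite I" "finite X" "\<forall>k\<in>X. bidder k \<in> I"
  shows "(\<Sum>i\<in>I. pdot J p (abun bidder a X i)) = pdot J p (usage a X)"
proof -
  have "(\<Sum>i\<in>I. pdot J p (abun bidder a X i))
      = (\<Sum>i\<in>I. \<Sum>k\<in>{k\<in>X. bidder k = i}. pdot J p (a k))"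
    using assms(1,3) pdot_usage[of J _ p a] unfolding abun_def usage_def by simp
  also have "\<dots> = (\<Sum>k\<in>X. pdot J p (a k))"
    by (rule sum.group) (use assms(2-4) in auto)
  finally show ?thesis using pdot_usage[OF assms(1,3)] by simp
qed

text \<open>Prices vanish on items in excess supply, so only fully sold items carry a price, and
  of those no feasible allocation uses more than \<open>X\<close> does.\<close>

lemma pdot_usage_le:
  assumes "\<forall>j\<in>J. p j \<ge> 0" "\<forall>j\<in>J. usage a X j < c j \<longrightarrow> p j = 0"
    and "\<forall>j\<in>J. usage a X j \<le> c j" "\<forall>j\<in>J. usage a Y j \<le> c j"
  shows "pdot J p (usage a Y) \<le> pdot J p (usage a X)"
  unfolding pdot_def
proof (rule sum_mono)
  fix j assume j: "j \<in> J"
  show "p j * real (usage a Y j) \<le> p j * real (usage a X j)"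
  proof (cases "usage a X j < c j")
    case True then show ?thesis using assms(2) j by simp
  next
    case False
    then have "usage a Y j \<le> usage a X j" using assms(3,4) j by fastforce
    then show ?thesis using assms(1) j by (simp add: mult_left_mono)
  qed
qed

lemma walrasian_pdot_usage_le:
  assumes "walrasian J I K bidder a b c X p" "feasible J K bidder a c Y"
  shows "pdot J p (usage a Y) \<le> pdot J p (usage a X)"
proof (rule pdot_usage_le)
  show "\<forall>j\<in>J. usage a X j \<le> c j" "\<forall>j\<in>J. usage a Y j \<le> c j"
    using assms walrasianD(1)[OF assms(1)] unfolding feasible_def by auto
qed (use walrasianD(2,5)[OF assms(1)] in auto)

lemma walrasian_accepted_bid_covers_price:
  assumes "auction J I K bidder a b c" "walrasian J I K bidder a b c X p" "k \<in> X"
  shows "pdot J p (a k) \<le> b k"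
proof -
  have feas: "feasible J K bidder a c X" using walrasianD(1)[OF assms(2)] .
  then have "X \<subseteq> K" by (rule feasible_subset)
  then have "finite X" and "bidder k \<in> I"
    using assms(1,3) unfolding auction_def by (auto intro: finite_subset)
  then have only_k: "{k'\<in>X. bidder k' = bidder k} = {k}"
    using feasible_bids_of_bidder[OF feas _ assms(3)] by simp
  have "surplus J bidder a b X p (bidder k) = b k - pdot J p (a k)"
    unfolding surplus_def bamt_def abun_def only_k by simp
  then show ?thesis using walrasianD(3)[OF assms(2) \<open>bidder k \<in> I\<close>] by simp
qed

lemma walrasian_tight_coalition:
  assumes auc: "auction J I K bidder a b c" and we: "walrasian J I K bidder a b c X p"
    and "C \<subseteq> I"
    and tight: "(\<Sum>i\<in>C. surplus J bidder a b X p i) + pdot J p (usage a X) \<le> w J K bidder a b c C"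
  obtains Y where "feasible J K bidder a c Y" "\<forall>k\<in>Y. bidder k \<in> C"
    "\<forall>k\<in>Y. pdot J p (a k) \<le> b k" "pdot J p (usage a Y) = pdot J p (usage a X)"
proof -
  let ?s = "surplus J bidder a b X p"
  have finJ: "finite J" and finI: "finite I" and finK: "finite K"
    using auc unfolding auction_def by auto
  obtain Y where feas: "feasible J K bidder a c Y" and YC: "\<forall>k\<in>Y. bidder k \<in> C"
    and Yw: "total_bid b Y = w J K bidder a b c C"
    using w_attained[OF finK] .
  have YK: "Y \<subseteq> K" using feas by (rule feasible_subset)
  then have finY: "finite Y" using finK by (rule finite_subset)
  have bid_le: "b k \<le> pdot J p (a k) + ?s (bidder k)" if "k \<in> Y" for k
    using walrasianD(4)[OF we] YK that by auto
  have "(\<Sum>k\<in>Y. ?s (bidder k)) = (\<Sum>i\<in>bidder ` Y. ?s i)"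
    by (simp add: sum.reindex[OF feasible_inj_on_bidder[OF feas finY]])
  also have "\<dots> \<le> (\<Sum>i\<in>C. ?s i)"
    using YC \<open>C \<subseteq> I\<close> finI walrasianD(3)[OF we]
    by (intro sum_mono2) (auto intro: finite_subset)
  finally have surplus_le: "(\<Sum>k\<in>Y. ?s (bidder k)) \<le> (\<Sum>i\<in>C. ?s i)" .
  have bids_le: "(\<Sum>k\<in>Y. b k) \<le> (\<Sum>k\<in>Y. pdot J p (a k) + ?s (bidder k))"
    using bid_le by (rule sum_mono)
  have "(\<Sum>k\<in>Y. pdot J p (a k) + ?s (bidder k)) = pdot J p (usage a Y) + (\<Sum>k\<in>Y. ?s (bidder k))"
    by (simp add: sum.distrib pdot_usage[OF finJ finY])
  moreover have "w J K bidder a b c C = (\<Sum>k\<in>Y. b k)" using Yw unfolding total_bid_def by simp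
  moreover note tight surplus_le bids_le walrasian_pdot_usage_le[OF we feas]
  ultimately have bids_eq: "(\<Sum>k\<in>Y. b k) = (\<Sum>k\<in>Y. pdot J p (a k) + ?s (bidder k))"
    and "pdot J p (usage a Y) = pdot J p (usage a X)"
    by linarith+
  moreover have "pdot J p (a k) \<le> b k" if "k \<in> Y" for k
  proof -
    have "b k = pdot J p (a k) + ?s (bidder k)"
      using sum_mono_inv[OF bids_eq bid_le that finY] .
    moreover have "bidder k \<in> I" using YC \<open>C \<subseteq> I\<close> that by auto
    ultimately show ?thesis using walrasianD(3)[OF we] by force
  qed
  ultimately show ?thesis using that feas YC by blast
qed

lemma core_selecting_lower_winner_payment:
  assumes core: "core_selecting J I K bidder a b c X \<rho>"
    and "finite I" "i \<in> I" "winner bidder X i" "\<epsilon> > 0"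
    and slack: "\<And>C. C \<subseteq> I \<Longrightarrow> i \<notin> C \<Longrightarrow>
      w J K bidder a b c C + \<epsilon> \<le> (\<Sum>j\<in>C. bamt bidder b X j - \<rho> j) + (\<Sum>j\<in>I. \<rho> j)"
  shows "core_selecting J I K bidder a b c X (\<lambda>j. \<rho> j - (if j = i then \<epsilon> else 0))"
  unfolding core_selecting_def
proof (intro conjI ballI allI impI)
  let ?\<rho>' = "\<lambda>j. \<rho> j - (if j = i then \<epsilon> else 0)"
  fix C assume "C \<subseteq> I"
  then have "finite C" using \<open>finite I\<close> by (rule finite_subset)
  have "(\<Sum>j\<in>C. bamt bidder b X j - ?\<rho>' j)
      = (\<Sum>j\<in>C. bamt bidder b X j - \<rho> j) + (if i \<in> C then \<epsilon> else 0)"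
  proof -
    have "(\<Sum>j\<in>C. bamt bidder b X j - ?\<rho>' j)
        = (\<Sum>j\<in>C. (bamt bidder b X j - \<rho> j) + (if j = i then \<epsilon> else 0))"
      by (rule sum.cong) auto
    then show ?thesis using \<open>finite C\<close> by (simp add: sum.distrib)
  qed
  moreover have "(\<Sum>j\<in>I. ?\<rho>' j) = (\<Sum>j\<in>I. \<rho> j) - \<epsilon>"
    using \<open>finite I\<close> \<open>i \<in> I\<close> by (simp add: sum_subtractf)
  moreover have "w J K bidder a b c C \<le> (\<Sum>j\<in>C. bamt bidder b X j - \<rho> j) + (\<Sum>j\<in>I. \<rho> j)"
    using core \<open>C \<subseteq> I\<close> unfolding core_selecting_def by blast
  ultimately show "w J K bidder a b c C \<le> (\<Sum>j\<in>C. bamt bidder b X j - ?\<rho>' j) + (\<Sum>j\<in>I. ?\<rho>' j)"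
    using slack[OF \<open>C \<subseteq> I\<close>] by (cases "i \<in> C") auto
qed (use core \<open>winner bidder X i\<close> \<open>\<epsilon> > 0\<close> in \<open>auto simp: core_selecting_def\<close>)

lemma MRC_winner_tight_coalition:
  assumes mrc: "MRC J I K bidder a b c X \<rho>" and "finite I" "i \<in> I" "winner bidder X i"
  obtains C where "C \<subseteq> I" "i \<notin> C"
    "(\<Sum>j\<in>C. bamt bidder b X j - \<rho> j) + (\<Sum>j\<in>I. \<rho> j) \<le> w J K bidder a b c C"
proof (rule ccontr)
  note tight = that
  let ?slack = "\<lambda>C. (\<Sum>j\<in>C. bamt bidder b X j - \<rho> j) + (\<Sum>j\<in>I. \<rho> j) - w J K bidder a b c C"
  let ?\<C> = "{C. C \<subseteq> I \<and> i \<notin> C}"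
  assume "\<not> thesis"
  then have pos: "?slack C > 0" if "C \<in> ?\<C>" for C
  proof -
    have "C \<subseteq> I" "i \<notin> C" using that by auto
    then have "\<not> (\<Sum>j\<in>C. bamt bidder b X j - \<rho> j) + (\<Sum>j\<in>I. \<rho> j) \<le> w J K bidder a b c C"
      using tight[of C] \<open>\<not> thesis\<close> by blast
    then show ?thesis by simp
  qed
  have fin: "finite (?slack ` ?\<C>)" using \<open>finite I\<close> by simp
  have "{} \<in> ?\<C>" by simp
  then have ne: "?slack ` ?\<C> \<noteq> {}" by blast
  define \<epsilon> where "\<epsilon> = Min (?slack ` ?\<C>)"
  have "\<epsilon> > 0" unfolding \<epsilon>_def using fin ne pos by (subst Min_gr_iff) auto
  have slack: "w J K bidder a b c C + \<epsilon> \<le> (\<Sum>j\<in>C. bamt bidder b X j - \<rho> j) + (\<Sum>j\<in>I. \<rho> j)"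
    if "C \<subseteq> I" "i \<notin> C" for C
  proof -
    have "\<epsilon> \<le> ?slack C" unfolding \<epsilon>_def using fin that by (intro Min_le) auto
    then show ?thesis by simp
  qed
  have "core_selecting J I K bidder a b c X \<rho>" using mrc unfolding MRC_def by blast
  from core_selecting_lower_winner_payment[OF this assms(2-4) \<open>\<epsilon> > 0\<close> slack]
  have "core_selecting J I K bidder a b c X (\<lambda>j. \<rho> j - (if j = i then \<epsilon> else 0))" .
  then have "(\<Sum>j\<in>I. \<rho> j) \<le> (\<Sum>j\<in>I. \<rho> j - (if j = i then \<epsilon> else 0))"
    using mrc unfolding MRC_def by blast
  then show False using \<open>finite I\<close> \<open>i \<in> I\<close> \<open>\<epsilon> > 0\<close> by (simp add: sum_subtractf)
qed

theorem corollary1: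
  fixes J :: "'j set" and I :: "'i set" and K :: "'k set"
    and bidder :: "'k \<Rightarrow> 'i" and a :: "'k \<Rightarrow> 'j \<Rightarrow> nat" and b :: "'k \<Rightarrow> real"
    and c :: "'j \<Rightarrow> nat" and X :: "'k set" and p :: "'j \<Rightarrow> real"
  assumes "auction J I K bidder a b c"
    and "efficient J K bidder a b c X"
    and "walrasian J I K bidder a b c X p"
    and "MRC J I K bidder a b c X (\<lambda>i. pdot J p (abun bidder a X i))"
  shows "price_match J I K bidder a b c X p"
proof -
  have "finite J" and finI: "finite I" and "finite K" and "\<forall>k\<in>K. bidder k \<in> I"
    using assms(1) unfolding auction_def by auto
  moreover have "X \<subseteq> K" using walrasianD(1)[OF assms(3)] by (rule feasible_subset)
  ultimately have revenue: "(\<Sum>i\<in>I. pdot J p (abun bidder a X i)) = pdot J p (usage a X)"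
    by (intro sum_pdot_abun) (auto intro: finite_subset)
  have "\<exists>Y. feasible J K bidder a c Y \<and> (\<forall>k\<in>Y. bidder k \<noteq> i) \<and>
          (\<forall>k\<in>Y. pdot J p (a k) \<le> b k) \<and> pdot J p (usage a Y) = pdot J p (usage a X)"
    if "i \<in> I" for i
  proof (cases "winner bidder X i")
    case True
    obtain C where C: "C \<subseteq> I" "i \<notin> C"
      and tight: "(\<Sum>j\<in>C. surplus J bidder a b X p j) + pdot J p (usage a X) \<le> w J K bidder a b c C"
      using MRC_winner_tight_coalition[OF assms(4) finI \<open>i \<in> I\<close> True]
      unfolding revenue surplus_def by blast
    obtain Y where "feasible J K bidder a c Y" "\<forall>k\<in>Y. bidder k \<in> C"
      "\<forall>k\<in>Y. pdot J p (a k) \<le> b k" "pdot J p (usage a Y) = pdot J p (usage a X)"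
      by (rule walrasian_tight_coalition[OF assms(1,3) C(1) tight])
    then show ?thesis using \<open>i \<notin> C\<close> by blast
  next
    case False
    then show ?thesis
      using walrasianD(1)[OF assms(3)] walrasian_accepted_bid_covers_price[OF assms(1,3)]
      unfolding winner_def by blast
  qed
  then show ?thesis unfolding price_match_def using assms(3) by blast
qed

end
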